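(* Let $\mathbb F_\infty$ have free basis $x_1,x_2,\dots$. Every $S$-invariant subgroup of $\mathbb F_\infty$ that contains the commutator $x_1x_2x_1^{-1}x_2^{-1}$ is fully characteristic, i.e. invariant under every endomorphism of $\mathbb F_\infty$.
   Context: $S\subseteq\mathrm{End}(\mathbb F_\infty)$ is the subsemigroup generated by: (i) for every $n$ and indices $i(1),\dots,i(n)$, the endomorphism $x_k\mapsto x_{i(k)}$ ($k\le n$), $x_k\mapsto x_k$ ($k>n$); (ii) for every $i$, the endomorphism $x_k\mapsto x_i^{-1}x_k$ for all $k$; (iii) for every $k$, the endomorphism $x_k\mapsto e$ fixing all other $x_j$; (iv) the endomorphism $x_k\mapsto x_k^{-1}$ for all $k$; (v) all inner automorphisms. A subgroup $H$ is $S$-invariant if $\phi(H)\subseteq H$ for all $\phi\in S$. *)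

theory Defs
  imports "HOL-Algebra.Group"
begin

text \<open>Free group on countably many generators x_0, x_1, x_2, ... (0-based indexing).
  A letter (True, i) stands for x_i, a letter (False, i) for x_i inverse.
  Elements are freely reduced words.\<close>

type_synonym fword = "(bool \<times> nat) list"

definition inv_letter :: "bool \<times> nat \<Rightarrow> bool \<times> nat" where
  "inv_letter a = (\<not> fst a, snd a)"

fun reduced :: "fword \<Rightarrow> bool" where
  "reduced [] = True"
| "reduced [a] = True"
| "reduced (a # b # w) = (b \<noteq> inv_letter a \<and> reduced (b # w))"

fun red_cons :: "bool \<times> nat \<Rightarrow> fword \<Rightarrow> fword" where
  "red_cons a [] = [a]"
| "red_cons a (b # w) = (if b = inv_letter a then w else a # b # w)"

definition reduce :: "fword \<Rightarrow> fword" where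
  "reduce w = foldr red_cons w []"

definition inv_word :: "fword \<Rightarrow> fword" where
  "inv_word w = rev (map inv_letter w)"

definition F_inf :: "fword monoid" where
  "F_inf = \<lparr>carrier = {w. reduced w}, mult = (\<lambda>u v. reduce (u @ v)), one = []\<rparr>"

definition gen :: "nat \<Rightarrow> fword" where
  "gen i = [(True, i)]"

definition subst :: "(nat \<Rightarrow> fword) \<Rightarrow> fword \<Rightarrow> fword" where
  "subst f w = reduce (concat (map (\<lambda>a. if fst a then f (snd a) else inv_word (f (snd a))) w))"

text \<open>Generators of the semigroup S (with 0-based indices).\<close>
inductive_set S_gens :: "(fword \<Rightarrow> fword) set" where
  rename: "subst (\<lambda>k. if k < n then gen (idx k) else gen k) \<in> S_gens"
| left_mult: "subst (\<lambda>k. reduce [inv_letter (True, i), (True, k)]) \<in> S_gens"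
| kill: "subst (\<lambda>j. if j = k then [] else gen j) \<in> S_gens"
| invert: "subst (\<lambda>k. inv_word (gen k)) \<in> S_gens"
| inner: "g \<in> carrier F_inf \<Longrightarrow>
           (\<lambda>w. g \<otimes>\<^bsub>F_inf\<^esub> w \<otimes>\<^bsub>F_inf\<^esub> inv\<^bsub>F_inf\<^esub> g) \<in> S_gens"

inductive_set S_semigroup :: "(fword \<Rightarrow> fword) set" where
  base: "\<phi> \<in> S_gens \<Longrightarrow> \<phi> \<in> S_semigroup"
| comp: "\<phi> \<in> S_semigroup \<Longrightarrow> \<psi> \<in> S_semigroup \<Longrightarrow> \<phi> \<circ> \<psi> \<in> S_semigroup"

definition S_invariant :: "fword set \<Rightarrow> bool" where
  "S_invariant H \<longleftrightarrow> (\<forall>\<phi> \<in> S_semigroup. \<phi> ` H \<subseteq> H)"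

definition fully_characteristic :: "fword set \<Rightarrow> bool" where
  "fully_characteristic H \<longleftrightarrow> (\<forall>\<phi> \<in> hom F_inf F_inf. \<phi> ` H \<subseteq> H)"

end

theory Submission
  imports Defs "HOL-Algebra.Coset" "HOL-Algebra.Generated_Groups"
begin

(* Let H be an S-invariant subgroup containing [x_0, x_1].
   (1) Inner automorphisms lie in S, so H is normal; renaming generators maps
       [x_0, x_1] to every [x_i, x_j], so the quotient Q = F/H is abelian.
   (2) In an abelian quotient, the image of a word w under any endomorphism
       phi splits as  phi(w) = phi(kill_k w) * phi(proj_k w)  mod H, where
       kill_k deletes x_k from w and proj_k keeps only the letters x_k.
   (3) If h is in H, then kill_k h is in H (an element of S) and proj_k h,
       obtained by killing all other generators occurring in h, is a power
       x_k^e in H.  Renaming gives x_l^e in H for all l, hence w^e in H for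
       every word w since Q is abelian; in particular phi(x_k^e) is in H.
   (4) Induction on the finite set of generators occurring in h yields
       phi(h) in H. *)

section \<open>Reduction of words\<close>

lemma inv_inv_letter [simp]: "inv_letter (inv_letter a) = a"
  by (simp add: inv_letter_def)

lemma reduced_tl: "reduced (a # w) \<Longrightarrow> reduced w"
  by (cases w) auto

lemma reduced_red_cons: "reduced r \<Longrightarrow> reduced (red_cons a r)"
  by (cases r) (auto dest: reduced_tl)

lemma reduced_foldr: "reduced z \<Longrightarrow> reduced (foldr red_cons u z)"
  by (induction u) (auto simp: reduced_red_cons)

lemma reduced_reduce [simp]: "reduced (reduce w)"
  unfolding reduce_def by (rule reduced_foldr) simp

lemma reduce_reduced: "reduced w \<Longrightarrow> reduce w = w"
  by (induction w rule: reduced.induct) (auto simp: reduce_def)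

lemma reduce_Nil [simp]: "reduce [] = []"
  by (simp add: reduce_def)

lemma reduce_Cons: "reduce (a # w) = red_cons a (reduce w)"
  by (simp add: reduce_def)

lemma red_cons_cancel: "reduced y \<Longrightarrow> red_cons a (red_cons (inv_letter a) y) = y"
proof (cases y)
  case (Cons c y')
  assume "reduced y"
  then show ?thesis
    using Cons by (cases "c = a"; cases y') auto
qed simp

text \<open>Reducing a prefix first does not change the final reduction: this is the
  key fact behind associativity of the product of reduced words.\<close>
lemma foldr_red_cons:
  assumes "reduced r" "reduced z"
  shows "foldr red_cons (red_cons a r) z = red_cons a (foldr red_cons r z)"
proof (cases r)
  case (Cons b r')
  show ?thesis
  proof (cases "b = inv_letter a")
    case True
    have "reduced (foldr red_cons r' z)" using assms(2) by (rule reduced_foldr)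
    then show ?thesis using Cons True red_cons_cancel by simp
  qed (use Cons in simp)
qed simp

lemma foldr_reduce: "reduced z \<Longrightarrow> foldr red_cons (reduce u) z = foldr red_cons u z"
proof (induction u)
  case (Cons a u)
  have "foldr red_cons (reduce (a # u)) z = red_cons a (foldr red_cons (reduce u) z)"
    unfolding reduce_Cons by (rule foldr_red_cons) (use Cons in simp_all)
  then show ?case using Cons by simp
qed (simp add: reduce_def)

lemma reduce_append: "reduce (u @ v) = foldr red_cons u (reduce v)"
  by (simp add: reduce_def)

lemma reduce_left [simp]: "reduce (reduce u @ v) = reduce (u @ v)"
  by (simp add: reduce_append foldr_reduce)

lemma reduce_right [simp]: "reduce (u @ reduce v) = reduce (u @ v)"
  by (simp add: reduce_append reduce_reduced)

lemma reduce_gen [simp]: "reduce (gen i) = gen i"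
  by (simp add: gen_def reduce_def)

lemma reduce_cancel_mid: "reduce (u @ inv_letter a # a # v) = reduce (u @ v)"
  using red_cons_cancel[of "reduce v" "inv_letter a"] by (simp add: reduce_append reduce_Cons)

lemma reduce_inv_word_left: "reduce (inv_word w @ w @ v) = reduce v"
proof (induction w arbitrary: v)
  case (Cons a w)
  have "inv_word (a # w) @ (a # w) @ v = inv_word w @ inv_letter a # a # (w @ v)"
    by (simp add: inv_word_def)
  then show ?case using Cons reduce_cancel_mid[of "inv_word w" a "w @ v"] by simp
qed (simp add: inv_word_def)

lemma inv_word_inv_word [simp]: "inv_word (inv_word w) = w"
  by (simp add: inv_word_def rev_map comp_def)

lemma reduce_inv_word_right: "reduce (w @ inv_word w @ v) = reduce v"
  using reduce_inv_word_left[of "inv_word w" v] by simp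

lemma set_reduce: "set (reduce w) \<subseteq> set w"
proof (induction w)
  case (Cons a w)
  have "set (red_cons a r) \<subseteq> insert a (set r)" for r
    by (cases r) auto
  then show ?case using Cons by (fastforce simp: reduce_Cons)
qed simp

section \<open>The free group \<open>F_inf\<close>\<close>

lemma F_carrier: "carrier F_inf = {w. reduced w}" by (simp add: F_inf_def)
lemma F_mult: "u \<otimes>\<^bsub>F_inf\<^esub> v = reduce (u @ v)" by (simp add: F_inf_def)
lemma F_one: "\<one>\<^bsub>F_inf\<^esub> = []" by (simp add: F_inf_def)

lemma group_F: "group F_inf"
proof (rule groupI)
  fix x assume "x \<in> carrier F_inf"
  then show "\<exists>y\<in>carrier F_inf. y \<otimes>\<^bsub>F_inf\<^esub> x = \<one>\<^bsub>F_inf\<^esub>"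
    using reduce_inv_word_left[of x "[]"]
    by (intro bexI[of _ "reduce (inv_word x)"]) (auto simp: F_carrier F_mult F_one)
qed (auto simp: F_carrier F_mult F_one reduce_reduced)

interpretation F: group F_inf by (rule group_F)

lemma gen_carrier [simp]: "gen i \<in> carrier F_inf"
  by (simp add: F_carrier gen_def)

lemma inv_gen: "inv\<^bsub>F_inf\<^esub> gen i = [(False, i)]"
proof (rule F.inv_equality)
  show "[(False, i)] \<otimes>\<^bsub>F_inf\<^esub> gen i = \<one>\<^bsub>F_inf\<^esub>"
    by (simp add: F_mult F_one gen_def reduce_def inv_letter_def)
qed (simp_all add: F_carrier gen_def)

lemma F_induct [consumes 1, case_names one gen inv_gen]:
  assumes "w \<in> carrier F_inf" "P []"
    "\<And>i u. u \<in> carrier F_inf \<Longrightarrow> P u \<Longrightarrow> P (gen i \<otimes>\<^bsub>F_inf\<^esub> u)"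
    "\<And>i u. u \<in> carrier F_inf \<Longrightarrow> P u \<Longrightarrow> P (inv\<^bsub>F_inf\<^esub> (gen i) \<otimes>\<^bsub>F_inf\<^esub> u)"
  shows "P w"
  using assms(1)
proof (induction w)
  case Nil then show ?case using assms(2) by simp
next
  case (Cons a w)
  then have r: "reduced (a # w)" and w: "w \<in> carrier F_inf"
    by (auto simp: F_carrier dest: reduced_tl)
  then have "P w" using Cons by simp
  obtain b i where a: "a = (b, i)" by force
  show ?case
  proof (cases b)
    case True
    then have "gen i \<otimes>\<^bsub>F_inf\<^esub> w = a # w"
      using r a by (simp add: F_mult gen_def reduce_reduced)
    then show ?thesis using assms(3)[OF w \<open>P w\<close>, of i] by simp
  next
    case False
    then have "inv\<^bsub>F_inf\<^esub> (gen i) \<otimes>\<^bsub>F_inf\<^esub> w = a # w"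
      using r a by (simp add: F_mult inv_gen reduce_reduced)
    then show ?thesis using assms(4)[OF w \<open>P w\<close>, of i] by simp
  qed
qed

section \<open>Homomorphisms out of \<open>F_inf\<close>\<close>

lemma hom_F_one: "group G \<Longrightarrow> \<chi> \<in> hom F_inf G \<Longrightarrow> \<chi> [] = \<one>\<^bsub>G\<^esub>"
  using hom_one[OF _ group_F] by (simp add: F_one)

lemma hom_F_inv:
  "group G \<Longrightarrow> \<chi> \<in> hom F_inf G \<Longrightarrow> w \<in> carrier F_inf \<Longrightarrow> \<chi> (inv\<^bsub>F_inf\<^esub> w) = inv\<^bsub>G\<^esub> \<chi> w"
  by (simp add: group_hom.hom_inv group_hom_def group_hom_axioms_def group_F)

lemma hom_image_in_subgroup:
  assumes G: "group G" and \<chi>: "\<chi> \<in> hom F_inf G" and K: "subgroup K G"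
    and gens: "\<And>i. \<chi> (gen i) \<in> K" and w: "w \<in> carrier F_inf"
  shows "\<chi> w \<in> K"
  using w
proof (induction rule: F_induct)
  case one
  then show ?case using hom_F_one[OF G \<chi>] subgroup.one_closed[OF K] by simp
next
  case (gen i u)
  then show ?case using hom_mult[OF \<chi>] gens subgroup.m_closed[OF K] by simp
next
  case (inv_gen i u)
  then show ?case
    using hom_mult[OF \<chi>] hom_F_inv[OF G \<chi>] gens subgroup.m_closed[OF K] subgroup.m_inv_closed[OF K]
    by simp
qed

lemma hom_eq_on_gens:
  assumes G: "group G" and \<chi>1: "\<chi>1 \<in> hom F_inf G" and \<chi>2: "\<chi>2 \<in> hom F_inf G"
    and gens: "\<And>i. \<chi>1 (gen i) = \<chi>2 (gen i)" and w: "w \<in> carrier F_inf"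
  shows "\<chi>1 w = \<chi>2 w"
  using w
proof (induction rule: F_induct)
  case one
  then show ?case using hom_F_one[OF G \<chi>1] hom_F_one[OF G \<chi>2] by simp
next
  case (gen i u)
  then show ?case using hom_mult[OF \<chi>1] hom_mult[OF \<chi>2] gens by simp
next
  case (inv_gen i u)
  then show ?case
    using hom_mult[OF \<chi>1] hom_mult[OF \<chi>2] hom_F_inv[OF G \<chi>1] hom_F_inv[OF G \<chi>2] gens by simp
qed

lemma (in group) centralizer_subgroup:
  assumes z: "z \<in> carrier G"
  shows "subgroup {x \<in> carrier G. x \<otimes> z = z \<otimes> x} G"
proof (rule subgroupI)
  fix x assume "x \<in> {x \<in> carrier G. x \<otimes> z = z \<otimes> x}"
  then have x: "x \<in> carrier G" and xz: "x \<otimes> z = z \<otimes> x" by auto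
  have "inv x \<otimes> z = inv x \<otimes> (z \<otimes> x) \<otimes> inv x" using x z by (simp add: m_assoc)
  also have "\<dots> = z \<otimes> inv x" using x z by (simp add: xz[symmetric] m_assoc[symmetric])
  finally show "inv x \<in> {x \<in> carrier G. x \<otimes> z = z \<otimes> x}" using x by simp
next
  fix x y assume "x \<in> {x \<in> carrier G. x \<otimes> z = z \<otimes> x}" "y \<in> {x \<in> carrier G. x \<otimes> z = z \<otimes> x}"
  then have x: "x \<in> carrier G" "x \<otimes> z = z \<otimes> x" and y: "y \<in> carrier G" "y \<otimes> z = z \<otimes> y" by auto
  have "x \<otimes> y \<otimes> z = x \<otimes> (z \<otimes> y)" using x y z by (simp add: m_assoc)
  also have "\<dots> = z \<otimes> (x \<otimes> y)" using x y z by (simp add: m_assoc[symmetric])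
  finally show "x \<otimes> y \<in> {x \<in> carrier G. x \<otimes> z = z \<otimes> x}" using x y by simp
qed (use z in auto)

lemma (in group) commutator_one_imp_commute:
  assumes a: "a \<in> carrier G" and b: "b \<in> carrier G" and c: "a \<otimes> b \<otimes> inv a \<otimes> inv b = \<one>"
  shows "a \<otimes> b = b \<otimes> a"
proof -
  have "a \<otimes> b \<otimes> inv a = (a \<otimes> b \<otimes> inv a \<otimes> inv b) \<otimes> b"
    using a b by (simp add: m_assoc)
  also have "\<dots> = b" using b by (simp add: c)
  finally have "a \<otimes> b \<otimes> inv a = b" .
  moreover have "a \<otimes> b = a \<otimes> b \<otimes> inv a \<otimes> a" using a b by (simp add: m_assoc)
  ultimately show ?thesis by simp
qed

lemma hom_image_commutes:
  assumes G: "group G" and \<chi>: "\<chi> \<in> hom F_inf G"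
    and gens: "\<And>i j. \<chi> (gen i) \<otimes>\<^bsub>G\<^esub> \<chi> (gen j) = \<chi> (gen j) \<otimes>\<^bsub>G\<^esub> \<chi> (gen i)"
    and u: "u \<in> carrier F_inf" and v: "v \<in> carrier F_inf"
  shows "\<chi> u \<otimes>\<^bsub>G\<^esub> \<chi> v = \<chi> v \<otimes>\<^bsub>G\<^esub> \<chi> u"
proof -
  have carr: "\<chi> w \<in> carrier G" if "w \<in> carrier F_inf" for w
    using \<chi> that by (rule hom_in_carrier)
  have with_gen: "\<chi> w \<otimes>\<^bsub>G\<^esub> \<chi> (gen j) = \<chi> (gen j) \<otimes>\<^bsub>G\<^esub> \<chi> w" if "w \<in> carrier F_inf" for w j
    using hom_image_in_subgroup[OF G \<chi> group.centralizer_subgroup[OF G carr[OF gen_carrier]] _ that]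
      gens carr by simp
  have "\<chi> v \<otimes>\<^bsub>G\<^esub> \<chi> u = \<chi> u \<otimes>\<^bsub>G\<^esub> \<chi> v"
    using hom_image_in_subgroup[OF G \<chi> group.centralizer_subgroup[OF G carr[OF u]] _ v]
      with_gen[OF u] carr by simp
  then show ?thesis by simp
qed

lemma hom_mult_comm:
  assumes Q: "comm_group Q" and \<chi>1: "\<chi>1 \<in> hom G Q" and \<chi>2: "\<chi>2 \<in> hom G Q"
  shows "(\<lambda>w. \<chi>1 w \<otimes>\<^bsub>Q\<^esub> \<chi>2 w) \<in> hom G Q"
proof -
  interpret Q: comm_group Q by (rule Q)
  show ?thesis
    using \<chi>1 \<chi>2 by (intro homI) (auto simp: hom_in_carrier hom_mult Q.m_ac)
qed

lemma hom_int_pow_comm: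
  assumes Q: "comm_group Q" and \<chi>: "\<chi> \<in> hom G Q"
  shows "(\<lambda>w. \<chi> w [^]\<^bsub>Q\<^esub> (e::int)) \<in> hom G Q"
proof -
  interpret Q: comm_group Q by (rule Q)
  show ?thesis
    using \<chi> by (intro homI) (auto simp: hom_in_carrier hom_mult Q.int_pow_distrib)
qed

section \<open>Substitution endomorphisms\<close>

definition subst_word :: "(nat \<Rightarrow> fword) \<Rightarrow> fword \<Rightarrow> fword" where
  "subst_word f w = concat (map (\<lambda>a. if fst a then f (snd a) else inv_word (f (snd a))) w)"

lemma subst_eq: "subst f w = reduce (subst_word f w)"
  by (simp add: subst_def subst_word_def)

lemma subst_word_append [simp]: "subst_word f (u @ v) = subst_word f u @ subst_word f v"
  by (simp add: subst_word_def)

lemma subst_word_Cons: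
  "subst_word f (a # w) = (if fst a then f (snd a) else inv_word (f (snd a))) @ subst_word f w"
  by (simp add: subst_word_def)

text \<open>Substitution respects free cancellation, so it is well defined on \<open>F_inf\<close>.\<close>
lemma subst_reduce [simp]: "subst f (reduce w) = subst f w"
proof (induction w)
  case (Cons a w)
  let ?fa = "if fst a then f (snd a) else inv_word (f (snd a))"
  have cancel: "reduce (subst_word f (red_cons a r)) = reduce (subst_word f (a # r))" for r
  proof (cases r)
    case (Cons b r')
    then show ?thesis
      using reduce_inv_word_right[of ?fa "subst_word f r'"] reduce_inv_word_left[of ?fa "subst_word f r'"]
      by (cases "b = inv_letter a") (auto simp: subst_word_Cons inv_letter_def)
  qed simp
  have "subst f (reduce (a # w)) = reduce (?fa @ reduce (subst_word f (reduce w)))"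
    by (simp add: subst_eq reduce_Cons cancel subst_word_Cons)
  also have "\<dots> = subst f (a # w)"
    using Cons by (simp add: subst_eq subst_word_Cons)
  finally show ?case .
qed simp

lemma subst_hom: "subst f \<in> hom F_inf F_inf"
proof (rule homI)
  fix x y
  show "subst f (x \<otimes>\<^bsub>F_inf\<^esub> y) = subst f x \<otimes>\<^bsub>F_inf\<^esub> subst f y"
    using subst_reduce[of f "x @ y"] by (simp add: F_mult subst_eq)
qed (auto simp: F_carrier subst_eq)

lemma subst_Nil [simp]: "subst f [] = []"
  by (simp add: subst_def)

lemma subst_gen: "subst f (gen i) = reduce (f i)"
  by (simp add: subst_eq gen_def subst_word_def)

lemma subst_cong:
  "(\<And>a. a \<in> set w \<Longrightarrow> f (snd a) = g (snd a)) \<Longrightarrow> subst f w = subst g w"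
  unfolding subst_def by (rule arg_cong[where f = reduce], rule arg_cong[where f = concat]) auto

definition support :: "fword \<Rightarrow> nat set" where
  "support w = snd ` set w"

lemma finite_support: "finite (support w)"
  by (simp add: support_def)

definition kill_gen :: "nat \<Rightarrow> fword \<Rightarrow> fword" where
  "kill_gen k = subst (\<lambda>j. if j = k then [] else gen j)"

definition kill_gens :: "nat set \<Rightarrow> fword \<Rightarrow> fword" where
  "kill_gens J = subst (\<lambda>j. if j \<in> J then [] else gen j)"

definition proj_gen :: "nat \<Rightarrow> fword \<Rightarrow> fword" where
  "proj_gen k = subst (\<lambda>j. if j = k then gen k else [])"

lemma support_kill_gen: "support (kill_gen k w) \<subseteq> support w - {k}"
proof -
  have "set (kill_gen k w) \<subseteq> set (subst_word (\<lambda>j. if j = k then [] else gen j) w)"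
    unfolding kill_gen_def subst_eq by (rule set_reduce)
  moreover have "snd ` set (subst_word (\<lambda>j. if j = k then [] else gen j) w) \<subseteq> support w - {k}"
    by (auto simp: support_def subst_word_def gen_def inv_word_def inv_letter_def split: if_splits)
  ultimately show ?thesis by (auto simp: support_def)
qed

lemma kill_gens_insert:
  "w \<in> carrier F_inf \<Longrightarrow> kill_gens (insert j J) w = kill_gen j (kill_gens J w)"
  unfolding kill_gens_def kill_gen_def
  by (rule hom_eq_on_gens[OF group_F subst_hom hom_compose[OF subst_hom subst_hom, simplified comp_def]])
     (simp_all add: subst_gen)

lemma kill_gens_empty: "w \<in> carrier F_inf \<Longrightarrow> kill_gens {} w = w"
  unfolding kill_gens_def
  by (rule hom_eq_on_gens[OF group_F subst_hom, of "\<lambda>w. w"]) (auto intro: homI simp: subst_gen)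

lemma proj_gen_eq_kill_gens:
  assumes "support w \<subseteq> insert k J" "k \<notin> J"
  shows "proj_gen k w = kill_gens J w"
  unfolding proj_gen_def kill_gens_def
  by (rule subst_cong) (use assms in \<open>auto simp: support_def\<close>)

lemma proj_gen_power:
  assumes "w \<in> carrier F_inf"
  obtains e :: int where "proj_gen k w = gen k [^]\<^bsub>F_inf\<^esub> e"
proof -
  have "proj_gen k w \<in> generate F_inf {gen k}"
  proof (rule hom_image_in_subgroup[OF group_F _ F.generate_is_subgroup _ assms])
    show "proj_gen k \<in> hom F_inf F_inf" by (simp add: proj_gen_def subst_hom)
    show "proj_gen k (gen i) \<in> generate F_inf {gen k}" for i
      using generate.one[of F_inf "{gen k}"] generate.incl[of "gen k" "{gen k}" F_inf]
      by (simp add: proj_gen_def subst_gen F_one)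
  qed simp
  then show ?thesis using that F.generate_pow[OF gen_carrier] by blast
qed

lemma hom_split_gen:
  assumes Q: "comm_group Q" and \<chi>: "\<chi> \<in> hom F_inf Q" and w: "w \<in> carrier F_inf"
  shows "\<chi> w = \<chi> (kill_gen k w) \<otimes>\<^bsub>Q\<^esub> \<chi> (proj_gen k w)"
proof -
  interpret Q: comm_group Q by (rule Q)
  have kill: "(\<lambda>w. \<chi> (kill_gen k w)) \<in> hom F_inf Q"
    using hom_compose[OF subst_hom \<chi>] by (simp add: comp_def kill_gen_def)
  have proj: "(\<lambda>w. \<chi> (proj_gen k w)) \<in> hom F_inf Q"
    using hom_compose[OF subst_hom \<chi>] by (simp add: comp_def proj_gen_def)
  show ?thesis
  proof (rule hom_eq_on_gens[OF Q.is_group \<chi> hom_mult_comm[OF Q kill proj] _ w])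
    fix i
    have "\<chi> (gen i) \<in> carrier Q" using \<chi> by (simp add: hom_in_carrier)
    then show "\<chi> (gen i) = \<chi> (kill_gen k (gen i)) \<otimes>\<^bsub>Q\<^esub> \<chi> (proj_gen k (gen i))"
      using hom_F_one[OF Q.is_group \<chi>]
      by (cases "i = k") (simp_all add: kill_gen_def proj_gen_def subst_gen)
  qed
qed

section \<open>S-invariant subgroups containing the commutator\<close>

locale S_invariant_subgroup =
  fixes H :: "fword set"
  assumes subgroup: "subgroup H F_inf"
    and S_inv: "S_invariant H"
    and commutator: "[(True, 0), (True, 1), (False, 0), (False, 1)] \<in> H"
begin

lemma H_carrier: "h \<in> H \<Longrightarrow> h \<in> carrier F_inf"
  using subgroup.subset[OF subgroup] by blast

lemma S_gens_closed: "\<phi> \<in> S_gens \<Longrightarrow> h \<in> H \<Longrightarrow> \<phi> h \<in> H"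
  using S_inv S_semigroup.base unfolding S_invariant_def by blast

lemma rename_closed: "h \<in> H \<Longrightarrow> subst (\<lambda>k. if k < n then gen (idx k) else gen k) h \<in> H"
  by (rule S_gens_closed[OF S_gens.rename])

lemma kill_gen_closed: "h \<in> H \<Longrightarrow> kill_gen k h \<in> H"
  unfolding kill_gen_def by (rule S_gens_closed[OF S_gens.kill])

lemma kill_gens_closed: "finite J \<Longrightarrow> h \<in> H \<Longrightarrow> kill_gens J h \<in> H"
  by (induction J rule: finite_induct)
     (simp_all add: kill_gens_empty kill_gens_insert H_carrier kill_gen_closed)

text \<open>Closure under inner automorphisms.\<close>
lemma normal: "H \<lhd> F_inf"
  unfolding F.normal_inv_iff using subgroup S_gens_closed[OF S_gens.inner] by blast

text \<open>The quotient is handled through its group structure only, so the concrete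
  coset descriptions of its operations are not unfolded.\<close>
declare mult_FactGroup [simp del] one_FactGroup [simp del]

abbreviation Q where "Q \<equiv> F_inf Mod H"
abbreviation q where "q \<equiv> r_coset F_inf H"

lemma Q_group: "group Q"
  using normal by (rule normal.factorgroup_is_group)

lemma q_hom: "q \<in> hom F_inf Q"
  using normal.r_coset_hom_Mod[OF normal] by simp

lemma q_one_iff: "w \<in> carrier F_inf \<Longrightarrow> q w = \<one>\<^bsub>Q\<^esub> \<longleftrightarrow> w \<in> H"
  using F.coset_join1[of H w] F.coset_join2[of w H] subgroup by (auto simp: one_FactGroup)

text \<open>Renaming \<open>x_0, x_1\<close> to \<open>x_i, x_j\<close> puts every commutator of generators into \<open>H\<close>.\<close>
lemma gen_commutator_closed:
  "gen i \<otimes>\<^bsub>F_inf\<^esub> gen j \<otimes>\<^bsub>F_inf\<^esub> inv\<^bsub>F_inf\<^esub> gen i \<otimes>\<^bsub>F_inf\<^esub> inv\<^bsub>F_inf\<^esub> gen j \<in> H"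
proof -
  let ?r = "subst (\<lambda>k. if k < 2 then gen (if k = 0 then i else j) else gen k)"
  have "?r [(True, 0), (True, 1), (False, 0), (False, 1)] \<in> H"
    by (rule rename_closed[OF commutator])
  moreover have "?r [(True, 0), (True, 1), (False, 0), (False, 1)]
      = reduce [(True, i), (True, j), (False, i), (False, j)]"
    by (simp add: subst_def gen_def inv_word_def inv_letter_def)
  moreover have "gen i \<otimes>\<^bsub>F_inf\<^esub> gen j \<otimes>\<^bsub>F_inf\<^esub> inv\<^bsub>F_inf\<^esub> gen i \<otimes>\<^bsub>F_inf\<^esub> inv\<^bsub>F_inf\<^esub> gen j
      = reduce [(True, i), (True, j), (False, i), (False, j)]"
    using reduce_left[of "[(True, i), (True, j)]" "[(False, i)]"]
      reduce_left[of "[(True, i), (True, j), (False, i)]" "[(False, j)]"]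
    unfolding F_mult inv_gen by (simp add: gen_def)
  ultimately show ?thesis by simp
qed

lemma Q_comm: "comm_group Q"
proof -
  interpret Q: group Q by (rule Q_group)
  have gens: "q (gen i) \<otimes>\<^bsub>Q\<^esub> q (gen j) = q (gen j) \<otimes>\<^bsub>Q\<^esub> q (gen i)" for i j
  proof -
    have "q (gen i) \<otimes>\<^bsub>Q\<^esub> q (gen j) \<otimes>\<^bsub>Q\<^esub> inv\<^bsub>Q\<^esub> q (gen i) \<otimes>\<^bsub>Q\<^esub> inv\<^bsub>Q\<^esub> q (gen j) = \<one>\<^bsub>Q\<^esub>"
      using q_one_iff[THEN iffD2, OF _ gen_commutator_closed[of i j]]
      by (simp add: hom_mult[OF q_hom] hom_F_inv[OF Q_group q_hom])
    then show ?thesis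
      using Q.commutator_one_imp_commute hom_in_carrier[OF q_hom gen_carrier] by blast
  qed
  show ?thesis
  proof (rule Q.group_comm_groupI)
    fix x y assume "x \<in> carrier Q" "y \<in> carrier Q"
    then obtain a b where "a \<in> carrier F_inf" "b \<in> carrier F_inf" "x = q a" "y = q b"
      unfolding carrier_FactGroup by blast
    then show "x \<otimes>\<^bsub>Q\<^esub> y = y \<otimes>\<^bsub>Q\<^esub> x"
      using hom_image_commutes[OF Q_group q_hom gens] by simp
  qed
qed

lemma endo_split_closed:
  assumes \<phi>: "\<phi> \<in> hom F_inf F_inf" and w: "w \<in> carrier F_inf"
    and kill: "\<phi> (kill_gen k w) \<in> H" and proj: "\<phi> (proj_gen k w) \<in> H"
  shows "\<phi> w \<in> H"
proof -
  have \<chi>: "q \<circ> \<phi> \<in> hom F_inf Q" using hom_compose[OF \<phi> q_hom] .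
  have "q (\<phi> w) = q (\<phi> (kill_gen k w)) \<otimes>\<^bsub>Q\<^esub> q (\<phi> (proj_gen k w))"
    using hom_split_gen[OF Q_comm \<chi> w] by simp
  also have "\<dots> = \<one>\<^bsub>Q\<^esub> \<otimes>\<^bsub>Q\<^esub> \<one>\<^bsub>Q\<^esub>"
    using q_one_iff[OF H_carrier[OF kill]] q_one_iff[OF H_carrier[OF proj]] kill proj by simp
  also have "\<dots> = \<one>\<^bsub>Q\<^esub>"
    using Q_group by (simp add: group.is_monoid)
  finally show ?thesis using q_one_iff hom_in_carrier[OF \<phi> w] by simp
qed

lemma int_pow_closed:
  assumes e: "gen k [^]\<^bsub>F_inf\<^esub> (e::int) \<in> H" and w: "w \<in> carrier F_inf"
  shows "w [^]\<^bsub>F_inf\<^esub> e \<in> H"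
proof -
  have gen_pow: "gen l [^]\<^bsub>F_inf\<^esub> e \<in> H" for l
  proof -
    let ?r = "subst (\<lambda>j. if j < Suc k then gen (if j = k then l else j) else gen j)"
    have "?r (gen k [^]\<^bsub>F_inf\<^esub> e) \<in> H" by (rule rename_closed[OF e])
    then show ?thesis by (simp add: hom_int_pow[OF subst_hom gen_carrier group_F group_F] subst_gen)
  qed
  have pow_q: "(\<lambda>w. q w [^]\<^bsub>Q\<^esub> e) \<in> hom F_inf Q"
    by (rule hom_int_pow_comm[OF Q_comm q_hom])
  have q_pow: "q (w [^]\<^bsub>F_inf\<^esub> e) = q w [^]\<^bsub>Q\<^esub> e" if "w \<in> carrier F_inf" for w
    using hom_int_pow[OF q_hom that group_F Q_group] .
  have "q (gen l) [^]\<^bsub>Q\<^esub> e = \<one>\<^bsub>Q\<^esub>" for l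
    using q_pow[OF gen_carrier, of l, symmetric] q_one_iff gen_pow by simp
  then have "q w [^]\<^bsub>Q\<^esub> e = \<one>\<^bsub>Q\<^esub>"
    using hom_eq_on_gens[OF Q_group pow_q trivial_hom[OF Q_group] _ w] by simp
  then show ?thesis using q_pow[OF w] q_one_iff w by simp
qed

lemma endo_closed_on_support:
  assumes \<phi>: "\<phi> \<in> hom F_inf F_inf" and I: "finite I"
  shows "h \<in> H \<Longrightarrow> support h \<subseteq> I \<Longrightarrow> \<phi> h \<in> H"
  using I
proof (induction I arbitrary: h rule: finite_induct)
  case empty
  then have "h = []" by (simp add: support_def)
  then show ?case
    using hom_F_one[OF group_F \<phi>] subgroup.one_closed[OF subgroup] by (simp add: F_one)
next
  case (insert k I)
  have h: "h \<in> carrier F_inf" using insert.prems H_carrier by blast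
  have "support (kill_gen k h) \<subseteq> I"
    using support_kill_gen[of k h] insert.prems by blast
  then have kill: "\<phi> (kill_gen k h) \<in> H"
    using insert.IH kill_gen_closed[OF insert.prems(1)] by blast
  obtain e :: int where e: "proj_gen k h = gen k [^]\<^bsub>F_inf\<^esub> e"
    using proj_gen_power[OF h, where k = k] by blast
  have "proj_gen k h \<in> H"
    using proj_gen_eq_kill_gens[OF insert.prems(2) insert.hyps(2)]
      kill_gens_closed[OF insert.hyps(1) insert.prems(1)] by simp
  then have "\<phi> (gen k) [^]\<^bsub>F_inf\<^esub> e \<in> H"
    using int_pow_closed[of k e] hom_in_carrier[OF \<phi> gen_carrier] e by simp
  then have "\<phi> (proj_gen k h) \<in> H"
    using e hom_int_pow[OF \<phi> gen_carrier group_F group_F] by simp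
  then show ?case using endo_split_closed[OF \<phi> h kill] by blast
qed

end

theorem mainTheorem11:
  assumes "subgroup H F_inf"
    and "S_invariant H"
    and "[(True, 0), (True, 1), (False, 0), (False, 1)] \<in> H"
  shows "fully_characteristic H"
proof -
  interpret S_invariant_subgroup H
    using assms by (rule S_invariant_subgroup.intro)
  show ?thesis
    unfolding fully_characteristic_def
    using endo_closed_on_support[OF _ finite_support] by blast
qed

end
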